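(* For all integers $n, k \geq 1$ with $n \geq k$, $$\sum_{i=k}^{n} \frac{s(n,i)\, S(i,k)}{i} = (-1)^{n-k} \frac{(n-1)!}{k!} \sum_{\ell=0}^{n-k} \frac{(-1)^{\ell}}{\ell!} B_{\ell}^*.$$
   Context: For $n \geq 0$, $X^{\underline{n}} := X(X-1)\cdots(X-n+1)$ ($X^{\underline{0}}=1$). The (signed) Stirling numbers of the first kind $s(n,k)$ are defined by $X^{\underline{n}} = \sum_{k=0}^{n} s(n,k) X^k$, and the Stirling numbers of the second kind $S(n,k)$ by $X^n = \sum_{k=0}^{n} S(n,k) X^{\underline{k}}$ (for all $n\ge 0$), with $s(n,k)=S(n,k)=0$ when $n<k$. The Bernoulli numbers of the second kind $B_n^*$ are defined by $\frac{t}{\log(1+t)} = \sum_{n \ge 0} B_n^* \frac{t^n}{n!}$. *)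

theory Defs
  imports "HOL-Combinatorics.Stirling" "HOL-Computational_Algebra.Formal_Power_Series"
begin

text \<open>Signed Stirling numbers of the first kind s(n,k) = (-1)^(n-k) c(n,k),
  where the library's stirling n k is the unsigned version c(n,k).\<close>
definition stirling1_signed :: "nat \<Rightarrow> nat \<Rightarrow> int" where
  "stirling1_signed n k = (-1) ^ (n - k) * int (stirling n k)"

text \<open>Bernoulli numbers of the second kind: t / log(1+t) = sum B*_n t^n / n!.
  fps_ln 1 is the power series of log(1+t).\<close>
definition bernoulli2 :: "nat \<Rightarrow> real" where
  "bernoulli2 n = fact n * fps_nth (fps_X / fps_ln (1::real)) n"

end

theory Submission
  imports Defs
begin

text \<open>Write L = log(1+t). The exponential generating function of the signed Stirling
  numbers gives s(n,i) = n!/i! [t^n] L^i. Since t (L^i)' = i L^i H with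
  H = t / ((1+t) L) (the series bernoulli2_alt_sums_fps), comparing coefficients of t^n
  expresses s(n,i)/i as (n-1)!/i! times the convolution of L^i with H. Summing against S(i,k)
  and using the orthogonality sum_i s(m,i) S(i,k) = [m = k] collapses the convolution to
  (n-1)!/k! [t^(n-k)] H, and the coefficients of H = (t/L) / (1+t) are alternating partial
  sums of B*_l / l!.\<close>

unbundle fps_syntax

lemma stirling1_signed_0_left: "stirling1_signed 0 i = (if i = 0 then 1 else 0)"
  by (cases i) (simp_all add: stirling1_signed_def)

lemma stirling1_signed_Suc_0 [simp]: "stirling1_signed (Suc n) 0 = 0"
  by (simp add: stirling1_signed_def)

lemma stirling1_signed_less [simp]: "n < k \<Longrightarrow> stirling1_signed n k = 0"
  by (simp add: stirling1_signed_def)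

lemma stirling1_signed_Suc_Suc:
  "stirling1_signed (Suc n) (Suc k) = stirling1_signed n k - int n * stirling1_signed n (Suc k)"
proof (cases "k < n")
  case True
  then have "n - k = Suc (n - Suc k)" by simp
  then show ?thesis by (simp add: stirling1_signed_def algebra_simps)
qed (simp add: stirling1_signed_def)

lemma sum_stirling1_signed_Stirling:
  "(\<Sum>i\<le>n. stirling1_signed n i * int (Stirling i k)) = (if n = k then 1 else 0)"
proof (induction n arbitrary: k)
  case 0
  then show ?case by (cases k) (simp_all add: stirling1_signed_0_left)
next
  case (Suc n)
  have "(\<Sum>i\<le>Suc n. stirling1_signed (Suc n) i * int (Stirling i k))
      = (\<Sum>i\<le>n. stirling1_signed n i * int (Stirling (Suc i) k))
        - int n * (\<Sum>i\<le>n. stirling1_signed n (Suc i) * int (Stirling (Suc i) k))"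
    unfolding sum.atMost_Suc_shift
    by (simp add: stirling1_signed_Suc_Suc algebra_simps sum_subtractf sum_distrib_left)
  also have "\<dots> = (if Suc n = k then 1 else 0)"
  proof (cases k)
    case (Suc j)
    have shifted: "(\<Sum>i\<le>n. stirling1_signed n (Suc i) * int (Stirling (Suc i) k))
        = (\<Sum>i\<le>n. stirling1_signed n i * int (Stirling i k))"
    proof -
      have "(\<Sum>i\<le>Suc n. stirling1_signed n i * int (Stirling i k))
          = (\<Sum>i\<le>n. stirling1_signed n (Suc i) * int (Stirling (Suc i) k))"
        unfolding sum.atMost_Suc_shift using Suc by simp
      then show ?thesis by simp
    qed
    have "(\<Sum>i\<le>n. stirling1_signed n i * int (Stirling (Suc i) k))
       = int k * (\<Sum>i\<le>n. stirling1_signed n i * int (Stirling i k))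
         + (\<Sum>i\<le>n. stirling1_signed n i * int (Stirling i j))"
      by (simp add: Suc algebra_simps sum.distrib sum_distrib_left)
    then show ?thesis
      unfolding shifted Suc.IH using Suc by auto
  qed simp
  finally show ?case .
qed

lemma fps_ln_dvd_fps_X: "fps_ln (1::'a::field_char_0) dvd fps_X"
proof -
  have "fps_ln (1::'a) $ 1 \<noteq> 0" by (simp add: fps_ln_nth)
  then have "fps_ln (1::'a) \<noteq> 0" and "subdegree (fps_ln (1::'a)) \<le> 1"
    using subdegree_leI by auto
  then show ?thesis by (simp add: fps_dvd_iff)
qed

lemma one_plus_fps_X_mult_deriv_fps_ln_power:
  "(1 + fps_X) * fps_deriv (fps_ln 1 ^ Suc i) = of_nat (Suc i) * fps_ln (1::'a::field_char_0) ^ i"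
proof -
  have "(1 + fps_X) * inverse (1 + fps_X) = (1::'a fps)" by (rule inverse_mult_eq_1') simp
  then show ?thesis
    by (simp add: fps_deriv_power fps_ln_deriv fps_of_nat del: power_Suc of_nat_Suc)
qed

lemma fps_ln_power_nth_Suc:
  "of_nat (Suc n) * (fps_ln 1 ^ Suc i) $ Suc n + of_nat n * (fps_ln 1 ^ Suc i) $ n
     = of_nat (Suc i) * (fps_ln (1::'a::field_char_0) ^ i) $ n"
proof -
  have "((1 + fps_X) * fps_deriv (fps_ln 1 ^ Suc i)) $ n = (of_nat (Suc i) * fps_ln (1::'a) ^ i) $ n"
    by (simp only: one_plus_fps_X_mult_deriv_fps_ln_power)
  then show ?thesis
    by (cases n) (simp_all add: distrib_right fps_of_nat algebra_simps del: power_Suc)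
qed

lemma stirling1_signed_conv_fps_ln_power:
  "of_int (stirling1_signed n i) = fact n / fact i * (fps_ln (1::'a::field_char_0) ^ i) $ n"
proof (induction n arbitrary: i)
  case 0
  then show ?case by (simp add: stirling1_signed_0_left fps_nth_power_0)
next
  case (Suc n)
  show ?case
  proof (cases i)
    case (Suc j)
    have "of_int (stirling1_signed (Suc n) (Suc j))
        = fact n / fact j * (fps_ln 1 ^ j) $ n
          - of_nat n * (fact n / fact (Suc j) * (fps_ln (1::'a) ^ Suc j) $ n)"
      using Suc.IH[of j] Suc.IH[of "Suc j"] by (simp add: stirling1_signed_Suc_Suc del: power_Suc)
    also have "\<dots> = fact (Suc n) / fact (Suc j) * (fps_ln 1 ^ Suc j) $ Suc n"
      using fps_ln_power_nth_Suc[where 'a='a, of n j]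
      by (simp add: field_simps del: of_nat_Suc power_Suc) (metis distrib_left)
    finally show ?thesis using Suc by simp
  qed simp
qed

definition bernoulli2_alt_sums_fps :: "'a::field_char_0 fps" where
  "bernoulli2_alt_sums_fps = fps_X / fps_ln 1 * inverse (1 + fps_X)"

lemma fps_X_mult_deriv_fps_ln_power:
  "fps_X * fps_deriv (fps_ln 1 ^ i)
     = of_nat i * fps_ln (1::'a::field_char_0) ^ i * bernoulli2_alt_sums_fps"
proof (cases i)
  case (Suc j)
  have "fps_ln 1 * (fps_X / fps_ln 1) = (fps_X :: 'a fps)"
    using fps_ln_dvd_fps_X by (rule dvd_mult_div_cancel)
  then have "fps_X * fps_ln 1 ^ j = fps_ln 1 ^ i * (fps_X / fps_ln (1::'a))"
    by (simp add: Suc mult_ac)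
  then show ?thesis
    by (simp add: Suc fps_deriv_power fps_ln_deriv fps_of_nat bernoulli2_alt_sums_fps_def
        mult_ac del: power_Suc of_nat_Suc)
qed simp

lemma fps_ln_power_nth_conv_sum:
  "of_nat n * (fps_ln 1 ^ i) $ n
     = of_nat i * (\<Sum>m\<le>n. (fps_ln (1::'a::field_char_0) ^ i) $ m * bernoulli2_alt_sums_fps $ (n - m))"
proof -
  have "of_nat n * (fps_ln 1 ^ i) $ n = (fps_X * fps_deriv (fps_ln (1::'a) ^ i)) $ n"
    by (cases n) simp_all
  also have "\<dots> = (of_nat i * (fps_ln 1 ^ i * bernoulli2_alt_sums_fps)) $ n"
    by (simp add: fps_X_mult_deriv_fps_ln_power mult.assoc)
  finally show ?thesis
    by (simp add: fps_mult_nth[of "fps_ln 1 ^ i"] atLeast0AtMost)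
qed

lemma stirling1_signed_div_conv_sum:
  assumes "i \<ge> 1"
  shows "of_int (stirling1_signed n i) / of_nat i
    = fact (n - 1) / fact i
      * (\<Sum>m\<le>n. (fps_ln (1::'a::field_char_0) ^ i) $ m * bernoulli2_alt_sums_fps $ (n - m))"
proof (cases n)
  case 0
  with assms show ?thesis by (simp add: stirling1_signed_0_left fps_nth_power_0)
next
  case (Suc n')
  with assms show ?thesis
    using fps_ln_power_nth_conv_sum[where 'a='a, of n i]
    by (simp add: stirling1_signed_conv_fps_ln_power field_simps del: of_nat_Suc)
qed

lemma sum_Stirling_fps_ln_power_nth:
  assumes "m \<le> n"
  shows "(\<Sum>i=k..n. of_nat (Stirling i k) / fact i * (fps_ln (1::'a::field_char_0) ^ i) $ m)
    = (if m = k then 1 / fact k else 0)"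
proof -
  have "(\<Sum>i=k..n. of_nat (Stirling i k) / fact i * (fps_ln (1::'a) ^ i) $ m)
      = (\<Sum>i\<le>n. of_int (stirling1_signed m i * int (Stirling i k)) / fact m)"
    by (rule sum.mono_neutral_cong_left)
      (auto simp: stirling1_signed_conv_fps_ln_power[where 'a='a])
  also have "\<dots> = (\<Sum>i\<le>m. of_int (stirling1_signed m i * int (Stirling i k)) / fact m)"
    using assms by (intro sum.mono_neutral_right) auto
  also have "\<dots> = (if m = k then 1 / fact k else 0)"
    by (simp only: sum_divide_distrib [symmetric] of_int_sum [symmetric] sum_stirling1_signed_Stirling)
      simp
  finally show ?thesis .
qed

lemma sum_stirling1_signed_Stirling_div:
  assumes "1 \<le> k" "k \<le> n"
  shows "(\<Sum>i=k..n. of_int (stirling1_signed n i) * of_nat (Stirling i k) / of_nat i)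
    = fact (n - 1) / fact k * (bernoulli2_alt_sums_fps :: 'a::field_char_0 fps) $ (n - k)"
proof -
  let ?H = "bernoulli2_alt_sums_fps :: 'a fps"
  have "(\<Sum>i=k..n. of_int (stirling1_signed n i) * of_nat (Stirling i k) / of_nat i)
      = (\<Sum>i=k..n. \<Sum>m\<le>n. fact (n - 1) * ?H $ (n - m)
                             * (of_nat (Stirling i k) / fact i * (fps_ln 1 ^ i) $ m))"
  proof (intro sum.cong refl)
    fix i assume "i \<in> {k..n}"
    with assms have "i \<ge> 1" by simp
    have "of_int (stirling1_signed n i) * of_nat (Stirling i k) / of_nat i
        = of_nat (Stirling i k) * (of_int (stirling1_signed n i) / (of_nat i :: 'a))"
      by simp
    with \<open>i \<ge> 1\<close> show "of_int (stirling1_signed n i) * of_nat (Stirling i k) / of_nat i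
        = (\<Sum>m\<le>n. fact (n - 1) * ?H $ (n - m)
             * (of_nat (Stirling i k) / fact i * (fps_ln 1 ^ i) $ m))"
      by (simp add: stirling1_signed_div_conv_sum sum_distrib_left mult_ac)
  qed
  also have "\<dots> = fact (n - 1) * (\<Sum>m\<le>n. ?H $ (n - m)
                    * (\<Sum>i=k..n. of_nat (Stirling i k) / fact i * (fps_ln 1 ^ i) $ m))"
    by (subst sum.swap) (simp add: sum_distrib_left mult.assoc)
  also have "\<dots> = fact (n - 1) * (\<Sum>m\<le>n. ?H $ (n - m) * (if m = k then 1 / fact k else 0))"
    by (intro arg_cong[where f = "\<lambda>x. fact (n - 1) * x"] sum.cong refl,
        subst sum_Stirling_fps_ln_power_nth) auto
  also have "\<dots> = fact (n - 1) / fact k * ?H $ (n - k)"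
    using assms by (simp add: if_distrib[of "\<lambda>x. _ * x"] cong: if_cong)
  finally show ?thesis .
qed

lemma bernoulli2_alt_sums_fps_nth:
  "bernoulli2_alt_sums_fps $ j = (-1) ^ j * (\<Sum>l\<le>j. (-1) ^ l / fact l * bernoulli2 l)"
proof -
  have "bernoulli2_alt_sums_fps $ j = (\<Sum>l\<le>j. (fps_X / fps_ln 1) $ l * (-1) ^ (j - l))"
    by (simp add: bernoulli2_alt_sums_fps_def fps_mult_nth fps_inverse_fps_X_plus1 atLeast0AtMost)
  also have "\<dots> = (\<Sum>l\<le>j. (-1) ^ j * ((-1) ^ l / fact l * bernoulli2 l))"
  proof (intro sum.cong refl)
    fix l assume "l \<in> {..j}"
    then have "(-1) ^ (j - l) = (-1) ^ j * ((-1::real) ^ l)"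
      by (simp flip: neg_one_power_add_eq_neg_one_power_diff add: power_add)
    then show "(fps_X / fps_ln 1) $ l * (-1) ^ (j - l) = (-1) ^ j * ((-1) ^ l / fact l * bernoulli2 l)"
      by (simp add: bernoulli2_def)
  qed
  finally show ?thesis by (simp add: sum_distrib_left)
qed

theorem corollary5:
  fixes n k :: nat
  assumes "k \<ge> 1" and "n \<ge> k"
  shows "(\<Sum>i=k..n. of_int (stirling1_signed n i) * real (Stirling i k) / real i)
    = (-1) ^ (n - k) * (fact (n - 1) / fact k)
      * (\<Sum>l=0..n-k. (-1) ^ l / fact l * bernoulli2 l)"
  using sum_stirling1_signed_Stirling_div[OF assms, where 'a=real]
  by (simp add: bernoulli2_alt_sums_fps_nth atLeast0AtMost)

end
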